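(* Assume $(\mathscr{A}_3)$ and $(\mathscr{A}_{10})$, and suppose $\Vert\widehat\Gamma_D-\Gamma_D\Vert_\infty=o_p(t_D)$. Then \[ A_{3n}:=\frac1n\sum_{j=1}^nC(Y_j)\widehat\Gamma_D^{-1}C(Y_j)-\frac1n\sum_{j=1}^nC_{e_n}(Y_j)\widehat\Gamma_D^{-1}C_{e_n}(Y_j)=O_p\Big(\frac{1}{t_D\sqrt n}\Big) \] (in Hilbert–Schmidt norm).
   Context: Let $\mathcal H=L^2([0,1])$; for $x,y\in\mathcal H$, $x\otimes y$ is the operator $u\mapsto\langle x,u\rangle_{\mathcal H}\,y$; $\Vert\cdot\Vert_{hs}$ is the Hilbert–Schmidt norm and $\Vert\cdot\Vert_\infty$ the operator norm. $X$ is a random element of $\mathcal H$ with $\mathbb E(X)=0$, $Y$ a real random variable with density $f$; $\Gamma=\mathbb E(X\otimes X)$ is non-singular and positive definite. Let $r(y)=\mathbb E(X\mid Y=y)$, $R(y)=\mathbb E(X\otimes X\mid Y=y)$, $m=fr$, $M=fR$, $C=R-r\otimes r$. $(e_n)$ is a sequence of positive reals tending to $0$; $f_{e_n}=\max(f,e_n)$, $r_{e_n}=m/f_{e_n}$, $R_{e_n}=M/f_{e_n}$, $C_{e_n}=R_{e_n}-r_{e_n}\otimes r_{e_n}$. For $D\in\mathbb N^*$, $\Pi_D$ is the orthogonal projector onto the span $S_D$ of the first $D$ elements of an orthonormal basis of $\mathcal H$, $\Gamma_D=\Pi_D\Gamma\Pi_D$, and $t_D$ is the smallest positive eigenvalue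 of $\Gamma_D$. $(X_i,Y_i)_{1\le i\le n}$ is an i.i.d. sample of $(X,Y)$, $\widehat\Gamma_n=n^{-1}\sum_iX_i\otimes X_i$, $\widehat\Pi_D$ is the projector onto an estimate $\widehat S_D$ of $S_D$, and $\widehat\Gamma_D=\widehat\Pi_D\widehat\Gamma_n\widehat\Pi_D$ with pseudo-inverse $\widehat\Gamma_D^{-1}$. Orders are as $n\to\infty$ (with $D\to\infty$). Assumptions: $(\mathscr{A}_3)$ $\mathbb E\Vert X\Vert_{\mathcal H}^4<\infty$; $(\mathscr{A}_{10})$ $\sqrt n\,\mathbb E[\Vert R(Y)\Vert_{hs}^2\mathbf 1_{\{f(Y)<e_n\}}]$, $\sqrt n\,\mathbb E[\Vert R(Y)\Vert_{hs}\Vert r(Y)\Vert_{\mathcal H}^2\mathbf 1_{\{f(Y)<e_n\}}]$ and $\sqrt n\,\mathbb E[\Vert r(Y)\Vert_{\mathcal H}^4\mathbf 1_{\{f(Y)<e_n\}}]$ tend to $0$. *)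

theory Defs
  imports "HOL-Probability.Probability"
begin

definition tens :: "'h::real_inner \<Rightarrow> 'h \<Rightarrow> 'h \<Rightarrow> 'h" where
  "tens x y = (\<lambda>u. inner x u *\<^sub>R y)"

definition hs_norm :: "(nat \<Rightarrow> 'h::real_inner) \<Rightarrow> ('h \<Rightarrow> 'h) \<Rightarrow> ennreal" where
  "hs_norm b T = (if summable (\<lambda>k. (norm (T (b k)))\<^sup>2)
                  then ennreal (sqrt (\<Sum>k. (norm (T (b k)))\<^sup>2)) else \<top>)"

definition proj_first :: "(nat \<Rightarrow> 'h::real_inner) \<Rightarrow> nat \<Rightarrow> 'h \<Rightarrow> 'h" where
  "proj_first b D x = (\<Sum>k<D. inner (b k) x *\<^sub>R b k)"

definition min_pos_eig :: "('h::real_vector \<Rightarrow> 'h) \<Rightarrow> real" where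
  "min_pos_eig T = Inf {c. 0 < c \<and> (\<exists>x. x \<noteq> 0 \<and> T x = c *\<^sub>R x)}"

text \<open>Moore--Penrose pseudo-inverse of a self-adjoint operator with closed (here finite-dim.) range:
  the unique z in range T with T z equal to the orthogonal projection of x onto range T.\<close>
definition pseudo_inv :: "('h::real_inner \<Rightarrow> 'h) \<Rightarrow> 'h \<Rightarrow> 'h" where
  "pseudo_inv T x = (THE z. z \<in> range T \<and> (\<forall>w\<in>range T. inner (T z - x) w = 0))"

definition orth_proj_dim :: "('h::real_inner \<Rightarrow> 'h) \<Rightarrow> nat \<Rightarrow> bool" where
  "orth_proj_dim P d \<longleftrightarrow> (\<exists>B. finite B \<and> independent B \<and> card B = d \<and>
      (\<forall>x. P x \<in> span B \<and> (\<forall>s\<in>span B. inner (x - P x) s = 0)))"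

definition outer_prob_le :: "'w measure \<Rightarrow> 'w set \<Rightarrow> real \<Rightarrow> bool" where
  "outer_prob_le M A \<delta> \<longleftrightarrow> (\<exists>B\<in>sets M. A \<inter> space M \<subseteq> B \<and> measure M B \<le> \<delta>)"

definition small_op :: "'w measure \<Rightarrow> (nat \<Rightarrow> 'w \<Rightarrow> real) \<Rightarrow> (nat \<Rightarrow> real) \<Rightarrow> bool" where
  "small_op M Z a \<longleftrightarrow> (\<forall>\<epsilon>>0. \<forall>\<delta>>0.
      eventually (\<lambda>n. outer_prob_le M {\<omega>. \<epsilon> * a n < \<bar>Z n \<omega>\<bar>} \<delta>) sequentially)"

definition big_Op :: "'w measure \<Rightarrow> (nat \<Rightarrow> 'w \<Rightarrow> ennreal) \<Rightarrow> (nat \<Rightarrow> real) \<Rightarrow> bool" where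
  "big_Op M Z a \<longleftrightarrow> (\<forall>\<delta>>0. \<exists>K.
      eventually (\<lambda>n. outer_prob_le M {\<omega>. ennreal (K * a n) < Z n \<omega>} \<delta>) sequentially)"


definition cond_cov :: "(real \<Rightarrow> 'h \<Rightarrow> 'h) \<Rightarrow> (real \<Rightarrow> 'h::real_inner) \<Rightarrow> real \<Rightarrow> 'h \<Rightarrow> 'h" where
  "cond_cov R r y u = R y u - tens (r y) (r y) u"

text \<open>Truncated versions: with f_e = max f e, m = f r, M = f R:
  r_e = m / f_e, R_e = M / f_e, C_e = R_e - r_e \<otimes> r_e.\<close>
definition r_trunc :: "(real \<Rightarrow> real) \<Rightarrow> real \<Rightarrow> (real \<Rightarrow> 'h::real_inner) \<Rightarrow> real \<Rightarrow> 'h" where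
  "r_trunc f e r y = (f y / max (f y) e) *\<^sub>R r y"
definition R_trunc :: "(real \<Rightarrow> real) \<Rightarrow> real \<Rightarrow> (real \<Rightarrow> 'h \<Rightarrow> 'h::real_inner) \<Rightarrow> real \<Rightarrow> 'h \<Rightarrow> 'h" where
  "R_trunc f e R y u = (f y / max (f y) e) *\<^sub>R R y u"
definition cond_cov_trunc :: "(real \<Rightarrow> real) \<Rightarrow> real \<Rightarrow> (real \<Rightarrow> 'h \<Rightarrow> 'h) \<Rightarrow> (real \<Rightarrow> 'h::real_inner)
    \<Rightarrow> real \<Rightarrow> 'h \<Rightarrow> 'h" where
  "cond_cov_trunc f e R r = cond_cov (R_trunc f e R) (r_trunc f e r)"

definition gamma_D :: "(nat \<Rightarrow> 'h::real_inner) \<Rightarrow> nat \<Rightarrow> ('h \<Rightarrow> 'h) \<Rightarrow> 'h \<Rightarrow> 'h" where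
  "gamma_D b D G = proj_first b D \<circ> G \<circ> proj_first b D"

definition gamma_hat :: "nat \<Rightarrow> (nat \<Rightarrow> 'h::real_inner) \<Rightarrow> 'h \<Rightarrow> 'h" where
  "gamma_hat n xs u = (1 / real n) *\<^sub>R (\<Sum>i<n. tens (xs i) (xs i) u)"

definition avg_sandwich :: "nat \<Rightarrow> (real \<Rightarrow> 'h \<Rightarrow> 'h) \<Rightarrow> ('h \<Rightarrow> 'h) \<Rightarrow> (nat \<Rightarrow> real) \<Rightarrow> 'h \<Rightarrow> 'h::real_vector" where
  "avg_sandwich n A T ys u = (1 / real n) *\<^sub>R (\<Sum>j<n. A (ys j) (T (A (ys j) u)))"

end

theory Submission
  imports Defs
begin

text \<open>Let t be the smallest positive eigenvalue of \<Gamma>_D. A Rayleigh-quotient argument shows t > 0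
  and t |x|^2 \<le> <\<Gamma> x, x> on the span S_D of the first D basis vectors. On the event where the
  compressed empirical covariance T = \<Pi> \<Gamma>hat_n \<Pi> (\<Pi> the estimated projector) is within t/2 of
  \<Gamma>_D in operator norm, T is coercive with constant t/2 on S_D; this makes \<Pi> injective on S_D, so
  \<Pi> maps S_D onto its D-dimensional range, T is coercive on that range too, and the pseudo-inverse
  Q of T has norm at most 2/t. Since C Q C - C_e Q C_e = (C - C_e) Q C + C_e Q (C - C_e) and C = C_e where
  f \<ge> e_n, the Hilbert--Schmidt norm of A_3n is then at most 4/t times the sample mean of
  (|R(Y_j)|_hs + |r(Y_j)|^2)^2 1{f(Y_j) < e_n}, whose expectation is o(n^(-1/2)) by (A10).
  Markov's inequality for that mean and the o_p hypothesis for the complementary event give the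
  claim.\<close>

section \<open>Orthogonal projections\<close>

definition is_orth_proj :: "('h::real_inner \<Rightarrow> 'h) \<Rightarrow> 'h set \<Rightarrow> bool" where
  "is_orth_proj P V \<longleftrightarrow> subspace V \<and> (\<forall>x. P x \<in> V \<and> (\<forall>s\<in>V. inner (x - P x) s = 0))"

context
  fixes P :: "'h::real_inner \<Rightarrow> 'h" and V :: "'h set"
  assumes P: "is_orth_proj P V"
begin

lemma is_orth_proj_subspace: "subspace V"
  using P by (simp add: is_orth_proj_def)

lemma is_orth_proj_in: "P x \<in> V"
  using P by (simp add: is_orth_proj_def)

lemma is_orth_proj_orthogonal: "s \<in> V \<Longrightarrow> inner (x - P x) s = 0"
  using P by (simp add: is_orth_proj_def)

lemma is_orth_proj_unique:
  assumes "y \<in> V" "\<And>s. s \<in> V \<Longrightarrow> inner (x - y) s = 0"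
  shows "P x = y"
proof -
  have d: "P x - y \<in> V"
    by (rule subspace_diff[OF is_orth_proj_subspace is_orth_proj_in assms(1)])
  have "inner (P x - y) (P x - y) = inner (x - y) (P x - y) - inner (x - P x) (P x - y)"
    by (simp add: inner_diff_left)
  also have "\<dots> = 0"
    using assms(2)[OF d] is_orth_proj_orthogonal[OF d] by simp
  finally show ?thesis by simp
qed

lemma is_orth_proj_id: "s \<in> V \<Longrightarrow> P s = s"
  by (rule is_orth_proj_unique) auto

lemma is_orth_proj_idem: "P (P x) = P x"
  by (simp add: is_orth_proj_id is_orth_proj_in)

lemma is_orth_proj_linear: "linear P"
proof (rule linearI)
  fix x y
  show "P (x + y) = P x + P y"
    using is_orth_proj_orthogonal[of _ x] is_orth_proj_orthogonal[of _ y]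
    by (intro is_orth_proj_unique subspace_add[OF is_orth_proj_subspace] is_orth_proj_in)
       (simp add: algebra_simps)
next
  fix c x
  show "P (c *\<^sub>R x) = c *\<^sub>R P x"
    using is_orth_proj_orthogonal[of _ x]
    by (intro is_orth_proj_unique subspace_scale[OF is_orth_proj_subspace] is_orth_proj_in)
       (simp add: algebra_simps flip: scaleR_diff_right)
qed

lemma is_orth_proj_symmetric: "inner (P x) y = inner x (P y)"
proof -
  have "inner (P x) y = inner (P x) (P y)" for x y
    using is_orth_proj_orthogonal[OF is_orth_proj_in, of y x]
    by (simp add: inner_diff_left inner_diff_right inner_commute)
  then show ?thesis by (metis inner_commute)
qed

lemma is_orth_proj_pythagoras: "s \<in> V \<Longrightarrow> (norm (x - s))\<^sup>2 = (norm (x - P x))\<^sup>2 + (norm (P x - s))\<^sup>2"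
proof -
  assume "s \<in> V"
  then have "P x - s \<in> V" by (rule subspace_diff[OF is_orth_proj_subspace is_orth_proj_in])
  then have "orthogonal (x - P x) (P x - s)"
    by (simp add: orthogonal_def is_orth_proj_orthogonal)
  then show ?thesis by (metis norm_add_Pythagorean diff_add_cancel add_diff_eq)
qed

lemma is_orth_proj_norm_le: "norm (P x) \<le> norm x"
proof (rule power2_le_imp_le)
  show "(norm (P x))\<^sup>2 \<le> (norm x)\<^sup>2"
    using is_orth_proj_pythagoras[OF subspace_0[OF is_orth_proj_subspace], of x] by simp
qed simp

lemma is_orth_proj_best_approx: "s \<in> V \<Longrightarrow> norm (x - P x) \<le> norm (x - s)"
proof (rule power2_le_imp_le)
  assume "s \<in> V"
  then show "(norm (x - P x))\<^sup>2 \<le> (norm (x - s))\<^sup>2"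
    using is_orth_proj_pythagoras[of s x] by simp
qed simp

lemma is_orth_proj_bounded_linear: "bounded_linear P"
proof -
  interpret linear P by (rule is_orth_proj_linear)
  show ?thesis
    by unfold_locales (use is_orth_proj_norm_le in \<open>auto intro!: exI[of _ 1]\<close>)
qed

end

lemma orth_proj_dimE:
  assumes "orth_proj_dim P d"
  obtains B where "finite B" "independent B" "card B = d" "is_orth_proj P (span B)"
  using assms unfolding orth_proj_dim_def is_orth_proj_def by blast

section \<open>Hilbert--Schmidt norm\<close>

definition hs_partial :: "(nat \<Rightarrow> 'h::real_normed_vector) \<Rightarrow> ('h \<Rightarrow> 'h) \<Rightarrow> nat \<Rightarrow> real" where
  "hs_partial b T N = L2_set (\<lambda>k. norm (T (b k))) {..<N}"

lemma hs_partial_nonneg: "0 \<le> hs_partial b T N"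
  by (simp add: hs_partial_def)

lemma hs_norm_eq_SUP: "hs_norm b T = (SUP N. ennreal (hs_partial b T N))"
proof -
  define s where "s N = (\<Sum>k<N. (norm (T (b k)))\<^sup>2)" for N
  have partial: "hs_partial b T N = sqrt (s N)" for N
    by (simp add: hs_partial_def L2_set_def s_def)
  have inc: "incseq (\<lambda>N. ennreal (hs_partial b T N))"
    unfolding partial s_def by (intro monoI ennreal_leI real_sqrt_le_mono sum_mono2) auto
  show ?thesis
  proof (cases "summable (\<lambda>k. (norm (T (b k)))\<^sup>2)")
    case True
    then have "s \<longlonglongrightarrow> (\<Sum>k. (norm (T (b k)))\<^sup>2)"
      unfolding s_def by (rule summable_LIMSEQ)
    then have "(\<lambda>N. ennreal (hs_partial b T N)) \<longlonglongrightarrow> hs_norm b T"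
      using True unfolding partial hs_norm_def by (simp add: tendsto_real_sqrt)
    then show ?thesis using LIMSEQ_SUP[OF inc] by (rule LIMSEQ_unique)
  next
    case False
    have top: "(SUP N. ennreal (hs_partial b T N)) = \<top>"
      unfolding SUP_eq_top_iff
    proof (intro allI impI)
      fix x :: ennreal assume "x < \<top>"
      then obtain c where c: "0 \<le> c" "x = ennreal c" by (cases x) auto
      have "\<not> (\<forall>N. s N \<le> c\<^sup>2)"
        using False unfolding s_def by (auto intro: summableI_nonneg_bounded)
      then obtain N where "c\<^sup>2 < s N" by (auto simp: not_le)
      then have "x < ennreal (hs_partial b T N)"
        using c by (simp add: partial real_less_rsqrt ennreal_less_iff)
      then show "\<exists>N\<in>UNIV. x < ennreal (hs_partial b T N)" by blast
    qed
    show ?thesis unfolding top using False by (simp add: hs_norm_def)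
  qed
qed

lemma hs_partial_le_hs_norm: "ennreal (hs_partial b T N) \<le> hs_norm b T"
  unfolding hs_norm_eq_SUP by (rule SUP_upper) simp

lemma hs_norm_le_pointwise_scale:
  assumes "\<And>k. norm (F (b k)) \<le> c * norm (G (b k))" "0 \<le> c"
  shows "hs_norm b F \<le> ennreal c * hs_norm b G"
  unfolding hs_norm_eq_SUP[of b F]
proof (rule SUP_least)
  fix N
  have "hs_partial b F N \<le> L2_set (\<lambda>k. c * norm (G (b k))) {..<N}"
    unfolding hs_partial_def by (rule L2_set_mono) (use assms in auto)
  also have "\<dots> = c * hs_partial b G N"
    unfolding hs_partial_def by (rule L2_set_right_distrib[symmetric]) fact
  finally have "ennreal (hs_partial b F N) \<le> ennreal c * ennreal (hs_partial b G N)"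
    using assms(2) by (simp add: ennreal_leI ennreal_mult'[symmetric])
  also have "\<dots> \<le> ennreal c * hs_norm b G"
    by (intro mult_left_mono hs_partial_le_hs_norm) simp
  finally show "ennreal (hs_partial b F N) \<le> ennreal c * hs_norm b G" .
qed

lemma hs_norm_le_pointwise_add:
  assumes "\<And>k. norm (H (b k)) \<le> norm (F (b k)) + norm (G (b k))"
  shows "hs_norm b H \<le> hs_norm b F + hs_norm b G"
  unfolding hs_norm_eq_SUP[of b H]
proof (rule SUP_least)
  fix N
  have "hs_partial b H N \<le> L2_set (\<lambda>k. norm (F (b k)) + norm (G (b k))) {..<N}"
    unfolding hs_partial_def by (rule L2_set_mono) (use assms in auto)
  also have "\<dots> \<le> hs_partial b F N + hs_partial b G N"
    unfolding hs_partial_def by (rule L2_set_triangle_ineq)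
  finally have "ennreal (hs_partial b H N) \<le> ennreal (hs_partial b F N) + ennreal (hs_partial b G N)"
    by (simp add: ennreal_leI hs_partial_nonneg flip: ennreal_plus)
  also have "\<dots> \<le> hs_norm b F + hs_norm b G"
    by (intro add_mono hs_partial_le_hs_norm)
  finally show "ennreal (hs_partial b H N) \<le> hs_norm b F + hs_norm b G" .
qed

lemma hs_norm_add: "hs_norm b (\<lambda>u. F u + G u) \<le> hs_norm b F + hs_norm b G"
  by (rule hs_norm_le_pointwise_add) (rule norm_triangle_ineq)

lemma hs_norm_zero: "hs_norm b (\<lambda>u. 0) = 0"
  by (simp add: hs_norm_def)

lemma hs_norm_sum:
  "finite A \<Longrightarrow> hs_norm b (\<lambda>u. \<Sum>j\<in>A. F j u) \<le> (\<Sum>j\<in>A. hs_norm b (F j))"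
proof (induction A rule: finite_induct)
  case empty
  then show ?case by (simp add: hs_norm_zero)
next
  case (insert x A)
  have "hs_norm b (\<lambda>u. \<Sum>j\<in>insert x A. F j u) \<le> hs_norm b (F x) + hs_norm b (\<lambda>u. \<Sum>j\<in>A. F j u)"
    using hs_norm_add[of b "F x"] insert.hyps by simp
  also have "\<dots> \<le> (\<Sum>j\<in>insert x A. hs_norm b (F j))"
    using insert by (simp add: add_left_mono)
  finally show ?case .
qed

lemma hs_norm_scaleR: "hs_norm b (\<lambda>u. c *\<^sub>R F u) \<le> ennreal \<bar>c\<bar> * hs_norm b F"
  by (rule hs_norm_le_pointwise_scale) auto

section \<open>Orthonormal sequences\<close>

lemma span_prefix_mono:
  fixes b :: "nat \<Rightarrow> 'a::real_vector"
  shows "N \<le> M \<Longrightarrow> span (b ` {..<N}) \<subseteq> span (b ` {..<M})"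
  by (intro span_mono image_mono) auto

lemma span_range_eq_UN_prefix:
  fixes b :: "nat \<Rightarrow> 'a::real_vector"
  shows "span (range b) = (\<Union>N. span (b ` {..<N}))"
proof
  have "subspace (\<Union>N. span (b ` {..<N}))"
    unfolding subspace_def
  proof (intro conjI ballI allI)
    fix x y assume "x \<in> (\<Union>N. span (b ` {..<N}))" "y \<in> (\<Union>N. span (b ` {..<N}))"
    then obtain N M where "x \<in> span (b ` {..<N})" "y \<in> span (b ` {..<M})" by blast
    then have "x \<in> span (b ` {..<max N M})" "y \<in> span (b ` {..<max N M})"
      using span_prefix_mono[of N "max N M" b] span_prefix_mono[of M "max N M" b] by auto
    then show "x + y \<in> (\<Union>N. span (b ` {..<N}))" by (blast intro: span_add)
  qed (auto intro: span_zero span_scale)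
  moreover have "range b \<subseteq> (\<Union>N. span (b ` {..<N}))"
    by (auto intro!: span_base)
  ultimately show "span (range b) \<subseteq> (\<Union>N. span (b ` {..<N}))"
    by (rule span_minimal[rotated])
qed (use span_mono[of "b ` {..<_}" "range b"] in auto)

locale orthonormal_seq =
  fixes b :: "nat \<Rightarrow> 'h::real_inner"
  assumes inner_basis: "inner (b i) (b j) = (if i = j then 1 else 0)"
begin

lemma norm_basis: "norm (b k) = 1"
  using inner_basis[of k k] by (simp add: norm_eq_sqrt_inner)

lemma independent_basis_prefix: "independent (b ` {..<N})"
proof (rule pairwise_orthogonal_independent)
  show "pairwise orthogonal (b ` {..<N})"
    unfolding pairwise_def orthogonal_def using inner_basis by auto
  show "0 \<notin> b ` {..<N}"
    using norm_basis by (metis image_iff norm_zero zero_neq_one)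
qed

lemma card_basis_prefix: "card (b ` {..<N}) = N"
proof -
  have "inj b" using inner_basis by (intro injI) (metis zero_neq_one)
  then show ?thesis by (simp add: card_image inj_on_subset)
qed

lemma inner_proj_first_basis:
  "inner (proj_first b N x) (b j) = (if j < N then inner (b j) x else 0)"
  by (simp add: proj_first_def inner_sum_left inner_basis if_distrib[of "(*) _"] cong: if_cong)

lemma is_orth_proj_proj_first: "is_orth_proj (proj_first b N) (span (b ` {..<N}))"
  unfolding is_orth_proj_def
proof (intro conjI allI ballI subspace_span)
  fix x
  show "proj_first b N x \<in> span (b ` {..<N})"
    unfolding proj_first_def by (intro span_sum span_scale span_base) auto
  fix s assume "s \<in> span (b ` {..<N})"
  then have "orthogonal (x - proj_first b N x) s"
    by (rule orthogonal_to_span)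
       (auto simp: orthogonal_def inner_diff_left inner_proj_first_basis inner_commute[of x])
  then show "inner (x - proj_first b N x) s = 0" by (simp add: orthogonal_def)
qed

lemma norm_proj_first_sq: "(norm (proj_first b N x))\<^sup>2 = (\<Sum>k<N. (inner (b k) x)\<^sup>2)"
proof -
  have "(norm (proj_first b N x))\<^sup>2 = inner x (proj_first b N (proj_first b N x))"
    by (simp add: power2_norm_eq_inner is_orth_proj_symmetric[OF is_orth_proj_proj_first])
  also have "\<dots> = inner x (proj_first b N x)"
    by (simp only: is_orth_proj_idem[OF is_orth_proj_proj_first])
  also have "\<dots> = (\<Sum>k<N. (inner (b k) x)\<^sup>2)"
    by (simp add: proj_first_def inner_sum_right power2_eq_square inner_commute)
  finally show ?thesis .
qed

lemma bessel_inequality: "(\<Sum>k<N. (inner (b k) x)\<^sup>2) \<le> (norm x)\<^sup>2"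
  unfolding norm_proj_first_sq[symmetric]
  by (intro power_mono is_orth_proj_norm_le[OF is_orth_proj_proj_first]) simp

lemma norm_apply_proj_first_le:
  assumes "linear A"
  shows "norm (A (proj_first b N x)) \<le> hs_partial b A N * norm x"
proof -
  interpret A: linear A by fact
  have "norm (A (proj_first b N x)) \<le> (\<Sum>k<N. \<bar>inner (b k) x\<bar> * norm (A (b k)))"
    unfolding proj_first_def A.sum A.scale by (rule order_trans[OF norm_sum]) simp
  also have "\<dots> \<le> L2_set (\<lambda>k. inner (b k) x) {..<N} * hs_partial b A N"
    unfolding hs_partial_def
    using L2_set_mult_ineq[of "\<lambda>k. inner (b k) x" "\<lambda>k. norm (A (b k))" "{..<N}"] by simp
  also have "L2_set (\<lambda>k. inner (b k) x) {..<N} \<le> norm x"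
    unfolding L2_set_def by (rule real_le_lsqrt) (simp_all add: bessel_inequality)
  finally show ?thesis
    by (simp add: mult.commute mult_right_mono hs_partial_nonneg)
qed

lemma hs_norm_tens_le: "hs_norm b (tens r r) \<le> ennreal ((norm r)\<^sup>2)"
  unfolding hs_norm_eq_SUP
proof (rule SUP_least)
  fix N
  have "(\<Sum>k<N. (norm (tens r r (b k)))\<^sup>2) = (norm r)\<^sup>2 * (\<Sum>k<N. (inner (b k) r)\<^sup>2)"
    by (simp add: tens_def sum_distrib_left power_mult_distrib inner_commute mult.commute)
  also have "\<dots> \<le> ((norm r)\<^sup>2)\<^sup>2"
    using bessel_inequality by (simp add: power2_eq_square mult_left_mono)
  finally have "hs_partial b (tens r r) N \<le> sqrt (((norm r)\<^sup>2)\<^sup>2)"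
    unfolding hs_partial_def L2_set_def by (rule real_sqrt_le_mono)
  then have "hs_partial b (tens r r) N \<le> (norm r)\<^sup>2" by (simp only: real_sqrt_abs abs_power2)
  then show "ennreal (hs_partial b (tens r r) N) \<le> ennreal ((norm r)\<^sup>2)"
    by (rule ennreal_leI)
qed

end

locale orthonormal_basis = orthonormal_seq +
  assumes dense_span: "closure (span (range b)) = UNIV"
begin

lemma proj_first_tendsto: "(\<lambda>N. proj_first b N x) \<longlonglongrightarrow> x"
proof (rule LIMSEQ_I)
  fix \<epsilon> :: real assume "0 < \<epsilon>"
  then obtain u where "u \<in> span (range b)" "dist u x < \<epsilon>"
    using dense_span closure_approachable by blast
  then obtain N0 where u: "u \<in> span (b ` {..<N0})" "norm (x - u) < \<epsilon>"
    by (auto simp: span_range_eq_UN_prefix dist_norm norm_minus_commute)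
  have "norm (proj_first b N x - x) < \<epsilon>" if "N0 \<le> N" for N
  proof -
    have "u \<in> span (b ` {..<N})" using u(1) span_prefix_mono[OF that] by blast
    then have "norm (x - proj_first b N x) \<le> norm (x - u)"
      by (rule is_orth_proj_best_approx[OF is_orth_proj_proj_first])
    then show ?thesis using u(2) by (simp add: norm_minus_commute)
  qed
  then show "\<exists>N0. \<forall>N\<ge>N0. norm (proj_first b N x - x) < \<epsilon>" by blast
qed

lemma parseval: "(\<lambda>k. (inner (b k) x)\<^sup>2) sums (norm x)\<^sup>2"
  unfolding sums_def norm_proj_first_sq[symmetric]
  by (intro tendsto_intros proj_first_tendsto)

lemma norm_le_hs_norm:
  assumes "bounded_linear A" "hs_norm b A \<le> ennreal h" "0 \<le> h"
  shows "norm (A x) \<le> h * norm x"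
proof (rule LIMSEQ_le_const2)
  show "(\<lambda>N. norm (A (proj_first b N x))) \<longlonglongrightarrow> norm (A x)"
    by (intro tendsto_norm bounded_linear.tendsto[OF assms(1)] proj_first_tendsto)
  have "hs_partial b A N \<le> h" for N
    using order_trans[OF hs_partial_le_hs_norm assms(2)] assms(3) by simp
  then show "\<exists>N0. \<forall>N\<ge>N0. norm (A (proj_first b N x)) \<le> h * norm x"
    using norm_apply_proj_first_le[OF bounded_linear.linear[OF assms(1)]]
    by (meson mult_right_mono norm_ge_zero order_trans)
qed

lemma borel_measurable_norm:
  assumes "\<And>k. (\<lambda>y. inner (b k) (F y)) \<in> borel_measurable M"
  shows "(\<lambda>y. norm (F y)) \<in> borel_measurable M"
proof -
  have "(\<lambda>y. (norm (F y))\<^sup>2) \<in> borel_measurable M"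
    by (rule borel_measurable_LIMSEQ_real[OF parseval[unfolded sums_def]]) (use assms in measurable)
  then have "(\<lambda>y. sqrt ((norm (F y))\<^sup>2)) \<in> borel_measurable M" by measurable
  then show ?thesis by simp
qed

lemma borel_measurable_hs_norm:
  assumes "\<And>u v. (\<lambda>y. inner (R y u) v) \<in> borel_measurable M"
  shows "(\<lambda>y. hs_norm b (R y)) \<in> borel_measurable M"
proof -
  have "(\<lambda>y. norm (R y (b k))) \<in> borel_measurable M" for k
    using assms by (intro borel_measurable_norm) (simp add: inner_commute)
  then have "(\<lambda>y. ennreal (hs_partial b (R y) N)) \<in> borel_measurable M" for N
    unfolding hs_partial_def L2_set_def by measurable
  then show ?thesis
    unfolding hs_norm_eq_SUP by (intro borel_measurable_SUP) auto
qed

end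

section \<open>Self-adjoint operators and the smallest eigenvalue of \<Gamma>_D\<close>

definition selfadjoint :: "('h::real_inner \<Rightarrow> 'h) \<Rightarrow> bool" where
  "selfadjoint A \<longleftrightarrow> bounded_linear A \<and> (\<forall>x y. inner (A x) y = inner x (A y))"

lemma selfadjoint_gamma_hat: "selfadjoint (gamma_hat n xs)"
  unfolding selfadjoint_def
proof
  show "bounded_linear (gamma_hat n xs)"
    unfolding gamma_hat_def tens_def by (intro bounded_linear_intros)
  show "\<forall>x y. inner (gamma_hat n xs x) y = inner x (gamma_hat n xs y)"
    by (simp add: gamma_hat_def tens_def inner_sum_left inner_sum_right inner_commute mult.commute)
qed

lemma selfadjoint_second_moment:
  assumes "bounded_linear \<Gamma>"
    and "\<And>u v. (\<integral>\<omega>. inner (X \<omega>) u * inner (X \<omega>) v \<partial>M) = inner (\<Gamma> u) v"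
  shows "selfadjoint \<Gamma>"
  unfolding selfadjoint_def
proof (intro conjI allI assms(1))
  fix x y
  have "inner (\<Gamma> x) y = inner (\<Gamma> y) x"
    using assms(2)[of x y] assms(2)[of y x] by (simp add: mult.commute)
  then show "inner (\<Gamma> x) y = inner x (\<Gamma> y)" by (simp add: inner_commute)
qed

lemma linear_coeff_zero_if_quadratic_nonneg:
  fixes a \<beta> :: real
  assumes "\<And>s. 0 \<le> 2 * s * a + s\<^sup>2 * \<beta>"
  shows "a = 0"
proof (rule ccontr)
  assume "a \<noteq> 0"
  define c where "c = \<bar>\<beta>\<bar> + 1"
  have c: "0 < c" "\<beta> - 2 * c < 0" by (auto simp: c_def)
  have "2 * (- a / c) * a + (- a / c)\<^sup>2 * \<beta> = a\<^sup>2 * (\<beta> - 2 * c) / c\<^sup>2"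
    using c by (simp add: field_simps power2_eq_square)
  also have "\<dots> < 0"
    using c \<open>a \<noteq> 0\<close> by (simp add: divide_neg_pos mult_pos_neg)
  finally show False using assms[of "- a / c"] by linarith
qed

lemma rayleigh_minimizer_eigenvector:
  assumes P: "is_orth_proj P V" and A: "selfadjoint A"
    and w: "w \<in> V" "norm w = 1"
    and min: "\<And>x. x \<in> V \<Longrightarrow> inner (A w) w * (norm x)\<^sup>2 \<le> inner (A x) x"
  shows "P (A w) = inner (A w) w *\<^sub>R w"
proof -
  interpret A: bounded_linear A using A by (simp add: selfadjoint_def)
  have sym: "inner (A x) y = inner x (A y)" for x y using A by (simp add: selfadjoint_def)
  have V: "subspace V" by (rule is_orth_proj_subspace[OF P])
  define l where "l = inner (A w) w"
  define y where "y = P (A w) - l *\<^sub>R w"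
  have y: "y \<in> V" unfolding y_def
    using V w(1) is_orth_proj_in[OF P] by (intro subspace_diff subspace_scale)
  have yy: "inner y y = inner (A w) y - l * inner w y"
    using is_orth_proj_symmetric[OF P, of "A w" y] is_orth_proj_id[OF P y]
    by (simp add: y_def inner_diff_left)
  have "0 \<le> 2 * s * inner y y + s\<^sup>2 * (inner (A y) y - l * inner y y)" for s
  proof -
    have "l * (norm (w + s *\<^sub>R y))\<^sup>2 \<le> inner (A (w + s *\<^sub>R y)) (w + s *\<^sub>R y)"
      unfolding l_def using V w(1) y by (intro min subspace_add subspace_scale)
    moreover have "(norm (w + s *\<^sub>R y))\<^sup>2 = (norm w)\<^sup>2 + 2 * s * inner w y + s\<^sup>2 * inner y y"
      unfolding power2_norm_eq_inner by (simp add: inner_commute[of y w] power2_eq_square algebra_simps)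
    moreover have "inner (A (w + s *\<^sub>R y)) (w + s *\<^sub>R y) = l + 2 * s * inner (A w) y + s\<^sup>2 * inner (A y) y"
      using sym[of y w] inner_commute[of y "A w"]
      by (simp add: l_def A.add A.scaleR power2_eq_square algebra_simps)
    ultimately show ?thesis unfolding yy using w(2) by (simp add: algebra_simps)
  qed
  then have "inner y y = 0" by (rule linear_coeff_zero_if_quadratic_nonneg)
  then show ?thesis by (simp add: y_def l_def)
qed

lemma min_pos_eig_sandwich:
  assumes P: "is_orth_proj P V" and A: "selfadjoint A"
    and w: "w \<in> V" "w \<noteq> 0" "P (A w) = l *\<^sub>R w" and "0 < l"
    and low: "\<And>x. x \<in> V \<Longrightarrow> l * (norm x)\<^sup>2 \<le> inner (A x) x"
  shows "min_pos_eig (P \<circ> A \<circ> P) = l"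
  unfolding min_pos_eig_def
proof (rule cInf_eq_minimum)
  show "l \<in> {c. 0 < c \<and> (\<exists>x. x \<noteq> 0 \<and> (P \<circ> A \<circ> P) x = c *\<^sub>R x)}"
    using w \<open>0 < l\<close> is_orth_proj_id[OF P] by auto
  fix c assume "c \<in> {c. 0 < c \<and> (\<exists>x. x \<noteq> 0 \<and> (P \<circ> A \<circ> P) x = c *\<^sub>R x)}"
  then obtain x where c: "0 < c" and x: "x \<noteq> 0" "P (A (P x)) = c *\<^sub>R x" by auto
  have "x = (1 / c) *\<^sub>R P (A (P x))" using x c by simp
  then have xV: "x \<in> V"
    by (metis is_orth_proj_in[OF P] is_orth_proj_subspace[OF P] subspace_scale)
  have "c * (norm x)\<^sup>2 = inner (P (A (P x))) x" using x by (simp add: power2_norm_eq_inner)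
  also have "\<dots> = inner (A x) x"
    using is_orth_proj_symmetric[OF P] is_orth_proj_id[OF P xV] by metis
  finally have "l * (norm x)\<^sup>2 \<le> c * (norm x)\<^sup>2" using low[OF xV] by simp
  then show "l \<le> c" using x by (simp add: mult_le_cancel_right_pos)
qed

text \<open>The image of the cube [-1,1]^N under the coefficient map. It is compact and, for orthonormal b,
  contains the unit sphere of span (b ` {..<N}); it stands in for that sphere because 'h is not
  assumed to be a heine_borel space.\<close>
primrec coeff_box :: "(nat \<Rightarrow> 'a::real_normed_vector) \<Rightarrow> nat \<Rightarrow> 'a set" where
  "coeff_box b 0 = {0}"
| "coeff_box b (Suc N) = {x + y | x y. x \<in> coeff_box b N \<and> y \<in> (\<lambda>c. c *\<^sub>R b N) ` {-1..1}}"

lemma compact_coeff_box: "compact (coeff_box b N)"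
proof (induction N)
  case (Suc N)
  have "compact ((\<lambda>c. c *\<^sub>R b N) ` {-1..1::real})"
    by (intro compact_continuous_image continuous_intros) auto
  with Suc show ?case by (simp add: compact_sums)
qed simp

lemma coeff_box_subset_span: "coeff_box b N \<subseteq> span (b ` {..<N})"
proof (induction N)
  case (Suc N)
  then have "coeff_box b N \<subseteq> span (b ` {..<Suc N})"
    using span_prefix_mono[of N "Suc N" b] by auto
  moreover have "b N \<in> span (b ` {..<Suc N})" by (intro span_base) auto
  ultimately show ?case by (auto intro!: span_add span_scale)
qed (simp add: span_zero)

context orthonormal_seq
begin

lemma proj_first_in_coeff_box: "norm x \<le> 1 \<Longrightarrow> proj_first b N x \<in> coeff_box b N"
proof (induction N)
  case (Suc N)
  have "\<bar>inner (b N) x\<bar> \<le> 1"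
    using Cauchy_Schwarz_ineq2[of "b N" x] Suc.prems norm_basis by simp
  then have "inner (b N) x *\<^sub>R b N \<in> (\<lambda>c. c *\<^sub>R b N) ` {-1..1}"
    by (intro image_eqI[OF refl]) (simp add: abs_le_iff)
  then show ?case using Suc by (auto simp: proj_first_def)
qed (simp add: proj_first_def)

lemma rayleigh_minimizer_exists:
  assumes "bounded_linear A" "1 \<le> D"
  obtains w where "w \<in> span (b ` {..<D})" "norm w = 1"
    "\<And>x. x \<in> span (b ` {..<D}) \<Longrightarrow> inner (A w) w * (norm x)\<^sup>2 \<le> inner (A x) x"
proof -
  interpret A: bounded_linear A by fact
  define V where "V = span (b ` {..<D})"
  define U where "U = coeff_box b D \<inter> {x. norm x = 1}"
  have unit: "x \<in> U" if "x \<in> V" "norm x = 1" for x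
  proof -
    have "proj_first b D x = x"
      using that(1) unfolding V_def by (rule is_orth_proj_id[OF is_orth_proj_proj_first])
    then show ?thesis using proj_first_in_coeff_box[of x D] that(2) by (simp add: U_def)
  qed
  have compact: "compact U"
    unfolding U_def
    by (intro compact_Int_closed compact_coeff_box closed_Collect_eq continuous_on_norm_id
        continuous_on_const)
  have "b 0 \<in> V"
    using assms(2) unfolding V_def by (intro span_base) auto
  then have nonempty: "U \<noteq> {}"
    using unit[of "b 0"] norm_basis by auto
  have cont: "continuous_on U (\<lambda>x. inner (A x) x)"
    by (rule continuous_on_inner[OF A.continuous_on[OF continuous_on_id] continuous_on_id])
  obtain w where w: "w \<in> U" and wmin: "\<And>y. y \<in> U \<Longrightarrow> inner (A w) w \<le> inner (A y) y"
    using continuous_attains_inf[OF compact nonempty cont] by blast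
  show ?thesis
  proof (rule that)
    show "w \<in> span (b ` {..<D})" "norm w = 1"
      using w coeff_box_subset_span by (auto simp: U_def)
    fix x assume x: "x \<in> span (b ` {..<D})"
    show "inner (A w) w * (norm x)\<^sup>2 \<le> inner (A x) x"
    proof (cases "x = 0")
      case False
      define c where "c = 1 / norm x"
      have "c *\<^sub>R x \<in> U"
        using False x by (intro unit) (simp_all add: c_def V_def span_scale)
      then have "inner (A w) w \<le> c\<^sup>2 * inner (A x) x"
        using wmin[of "c *\<^sub>R x"] by (simp add: A.scaleR power2_eq_square)
      then show ?thesis using False by (simp add: c_def power_one_over pos_le_divide_eq)
    qed simp
  qed
qed

lemma gamma_D_min_pos_eig:
  assumes \<Gamma>: "selfadjoint \<Gamma>" and pos: "\<And>x. x \<noteq> 0 \<Longrightarrow> 0 < inner (\<Gamma> x) x" and "1 \<le> D"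
  shows "0 < min_pos_eig (gamma_D b D \<Gamma>)"
    and "x \<in> span (b ` {..<D}) \<Longrightarrow> min_pos_eig (gamma_D b D \<Gamma>) * (norm x)\<^sup>2 \<le> inner (\<Gamma> x) x"
proof -
  have "bounded_linear \<Gamma>" using \<Gamma> by (simp add: selfadjoint_def)
  then obtain w where w: "w \<in> span (b ` {..<D})" "norm w = 1"
    and min: "\<And>x. x \<in> span (b ` {..<D}) \<Longrightarrow> inner (\<Gamma> w) w * (norm x)\<^sup>2 \<le> inner (\<Gamma> x) x"
    using rayleigh_minimizer_exists \<open>1 \<le> D\<close> by blast
  have l: "0 < inner (\<Gamma> w) w" using pos[of w] w(2) by fastforce
  have "min_pos_eig (gamma_D b D \<Gamma>) = inner (\<Gamma> w) w"
    unfolding gamma_D_def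
  proof (rule min_pos_eig_sandwich[OF is_orth_proj_proj_first \<Gamma> w(1) _ _ l min])
    show "w \<noteq> 0" using w(2) by auto
    show "proj_first b D (\<Gamma> w) = inner (\<Gamma> w) w *\<^sub>R w"
      by (rule rayleigh_minimizer_eigenvector[OF is_orth_proj_proj_first \<Gamma> w min])
  qed
  then show "0 < min_pos_eig (gamma_D b D \<Gamma>)"
    and "x \<in> span (b ` {..<D}) \<Longrightarrow> min_pos_eig (gamma_D b D \<Gamma>) * (norm x)\<^sup>2 \<le> inner (\<Gamma> x) x"
    using l min by simp_all
qed

end

section \<open>Pseudo-inverse of the estimated compressed covariance\<close>

lemma linear_inj_on_span_eq_card:
  assumes L: "linear L" and A: "finite A" "independent A" and B: "finite B" "card A = card B"
    and inj: "inj_on L (span A)" and sub: "L ` A \<subseteq> span B"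
  shows "L ` span A = span B"
proof
  show "L ` span A \<subseteq> span B"
    using sub by (simp add: span_linear_image[OF L, symmetric] span_minimal)
  have indep: "independent (L ` A)"
    by (rule linear_independent_injective_image[OF L A(2) inj])
  have card: "card (L ` A) = card B"
    using card_image[OF inj_on_subset[OF inj span_superset]] B(2) by simp
  have "s \<in> span (L ` A)" if s: "s \<in> span B" for s
  proof (rule ccontr)
    assume "s \<notin> span (L ` A)"
    then have "independent (insert s (L ` A))" "s \<notin> L ` A"
      using indep independent_insertI span_base by blast+
    moreover have "insert s (L ` A) \<subseteq> span B" using s sub by simp
    ultimately have "card (insert s (L ` A)) \<le> card B"
      using independent_span_bound[OF B(1)] by blast
    then show False using card A(1) \<open>s \<notin> L ` A\<close> by simp
  qed
  then show "span B \<subseteq> L ` span A"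
    by (auto simp: span_linear_image[OF L, symmetric])
qed

lemma coercive_imp_inj_on:
  assumes T: "linear T" and S: "subspace S" and c: "0 < c"
    and coercive: "\<And>v. v \<in> S \<Longrightarrow> c * (norm v)\<^sup>2 \<le> inner (T v) v"
  shows "inj_on T S"
  unfolding linear_inj_on_iff_eq_0[OF T S]
proof (intro ballI impI)
  fix v assume "v \<in> S" "T v = 0"
  then have "c * (norm v)\<^sup>2 \<le> 0" using coercive[of v] by simp
  then show "v = 0" using c by (simp add: mult_le_0_iff)
qed

lemma pseudo_inv_eqI:
  assumes P: "is_orth_proj P S" and T: "linear T" "range T = S" "inj_on T S"
    and z: "z \<in> S" "T z = P x"
  shows "pseudo_inv T x = z"
  unfolding pseudo_inv_def
proof (rule the_equality)
  show "z \<in> range T \<and> (\<forall>w\<in>range T. inner (T z - x) w = 0)"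
    using z T(2) is_orth_proj_orthogonal[OF P, of _ x]
    by (auto simp: algebra_simps)
  fix z' assume z': "z' \<in> range T \<and> (\<forall>w\<in>range T. inner (T z' - x) w = 0)"
  then have "P x = T z'"
    using T(2) by (intro is_orth_proj_unique[OF P]) (auto simp: algebra_simps)
  then show "z' = z"
    using z' z T by (metis inj_onD)
qed

lemma pseudo_inv_coercive:
  assumes P: "is_orth_proj P S" and T: "linear T" "\<And>x. T x \<in> S" "T ` S = S"
    and c: "0 < c" and coercive: "\<And>v. v \<in> S \<Longrightarrow> c * (norm v)\<^sup>2 \<le> inner (T v) v"
  shows "linear (pseudo_inv T)" and "norm (pseudo_inv T x) \<le> norm x / c"
proof -
  interpret T: linear T by (rule T(1))
  have S: "subspace S" by (rule is_orth_proj_subspace[OF P])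
  have range: "range T = S"
    using T(2) image_mono[OF subset_UNIV, of T S] unfolding T(3) by blast
  have inj: "inj_on T S" by (rule coercive_imp_inj_on[OF T(1) S c coercive])
  have Q: "pseudo_inv T x \<in> S \<and> T (pseudo_inv T x) = P x" for x
  proof -
    obtain z where "z \<in> S" "T z = P x"
      using is_orth_proj_in[OF P, of x] T(3) by (metis imageE)
    then show ?thesis using pseudo_inv_eqI[OF P T(1) range inj] by simp
  qed
  show "linear (pseudo_inv T)"
  proof (rule linearI)
    fix x y
    show "pseudo_inv T (x + y) = pseudo_inv T x + pseudo_inv T y"
      using Q[of x] Q[of y] is_orth_proj_linear[OF P]
      by (intro pseudo_inv_eqI[OF P T(1) range inj]) (auto simp: T.add linear_add S subspace_add)
  next
    fix r x
    show "pseudo_inv T (r *\<^sub>R x) = r *\<^sub>R pseudo_inv T x"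
      using Q[of x] is_orth_proj_linear[OF P]
      by (intro pseudo_inv_eqI[OF P T(1) range inj]) (auto simp: T.scale linear_scale S subspace_scale)
  qed
  show "norm (pseudo_inv T x) \<le> norm x / c"
  proof (cases "pseudo_inv T x = 0")
    case False
    let ?z = "pseudo_inv T x"
    have "c * (norm ?z)\<^sup>2 \<le> inner (P x) ?z" using coercive Q by metis
    also have "\<dots> = inner x ?z"
      using is_orth_proj_symmetric[OF P] is_orth_proj_id[OF P] Q by metis
    also have "\<dots> \<le> norm x * norm ?z" by (rule norm_cauchy_schwarz)
    finally show ?thesis using False c by (simp add: power2_eq_square pos_le_divide_eq mult.commute)
  qed (use c in simp)
qed

text \<open>A compression that is coercive on a subspace of the same dimension as its range is coercive on
  the whole range: coercivity makes P injective on that subspace, so P maps it onto the range.\<close>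
lemma compression_coercive_on_range:
  assumes P: "is_orth_proj P (span B)" "finite B"
    and E: "finite E" "independent E" "card E = card B"
    and A: "linear A" and c: "0 < c"
    and coercive: "\<And>x. x \<in> span E \<Longrightarrow> c * (norm x)\<^sup>2 \<le> inner ((P \<circ> A \<circ> P) x) x"
    and v: "v \<in> span B"
  shows "c * (norm v)\<^sup>2 \<le> inner ((P \<circ> A \<circ> P) v) v"
proof -
  interpret P: linear P by (rule is_orth_proj_linear[OF P(1)])
  have "inj_on (P \<circ> A \<circ> P) (span E)"
    using A by (intro coercive_imp_inj_on[OF _ subspace_span c coercive] linear_compose P.linear_axioms)
  then have "inj_on P (span E)" by (rule inj_on_imageI2)
  then have "P ` span E = span B"
    using E P(2) is_orth_proj_in[OF P(1)] by (intro linear_inj_on_span_eq_card[OF P.linear_axioms]) auto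
  then obtain x where x: "x \<in> span E" "v = P x" using v by blast
  have inner_eq: "inner ((P \<circ> A \<circ> P) y) y = inner (A (P y)) (P y)" for y
    by (simp add: is_orth_proj_symmetric[OF P(1)])
  have "c * (norm (P x))\<^sup>2 \<le> c * (norm x)\<^sup>2"
    using c is_orth_proj_norm_le[OF P(1)] by (simp add: power_mono)
  also have "\<dots> \<le> inner ((P \<circ> A \<circ> P) x) x" by (rule coercive[OF x(1)])
  finally show ?thesis unfolding x(2) inner_eq by (simp add: is_orth_proj_idem[OF P(1)])
qed

context orthonormal_seq
begin

lemma perturbed_gamma_D_coercive:
  assumes \<Gamma>: "selfadjoint \<Gamma>" and pos: "\<And>x. x \<noteq> 0 \<Longrightarrow> 0 < inner (\<Gamma> x) x" and D: "1 \<le> D"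
    and T: "bounded_linear T"
    and close: "onorm (\<lambda>u. T u - gamma_D b D \<Gamma> u) \<le> min_pos_eig (gamma_D b D \<Gamma>) / 2"
    and x: "x \<in> span (b ` {..<D})"
  shows "min_pos_eig (gamma_D b D \<Gamma>) / 2 * (norm x)\<^sup>2 \<le> inner (T x) x"
proof -
  define t where "t = min_pos_eig (gamma_D b D \<Gamma>)"
  note PD = is_orth_proj_proj_first[of D]
  have "bounded_linear \<Gamma>" using \<Gamma> by (simp add: selfadjoint_def)
  then have "bounded_linear (gamma_D b D \<Gamma>)"
    unfolding gamma_D_def comp_def
    by (rule bounded_linear_compose[OF is_orth_proj_bounded_linear[OF PD]
          bounded_linear_compose[OF _ is_orth_proj_bounded_linear[OF PD]]])
  then have "norm (T x - gamma_D b D \<Gamma> x) \<le> t / 2 * norm x"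
    using onorm[OF bounded_linear_sub[OF T], of "gamma_D b D \<Gamma>" x] close
    unfolding t_def by (meson mult_right_mono norm_ge_zero order_trans)
  then have "\<bar>inner (T x - gamma_D b D \<Gamma> x) x\<bar> \<le> t / 2 * norm x * norm x"
    by (rule order_trans[OF Cauchy_Schwarz_ineq2 mult_right_mono]) simp
  then have "\<bar>inner (T x) x - inner (gamma_D b D \<Gamma> x) x\<bar> \<le> t / 2 * (norm x)\<^sup>2"
    by (simp add: power2_eq_square mult.assoc inner_diff_left)
  moreover have "inner (gamma_D b D \<Gamma> x) x = inner (\<Gamma> x) x"
    using is_orth_proj_symmetric[OF PD] is_orth_proj_id[OF PD x] by (simp add: gamma_D_def)
  moreover have "t * (norm x)\<^sup>2 \<le> inner (\<Gamma> x) x"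
    unfolding t_def by (rule gamma_D_min_pos_eig(2)[OF \<Gamma> pos D x])
  ultimately show ?thesis unfolding t_def[symmetric] abs_le_iff by linarith
qed

lemma pseudo_inv_sandwich_bound:
  assumes P: "orth_proj_dim P D" and A: "selfadjoint A" and \<Gamma>: "selfadjoint \<Gamma>"
    and pos: "\<And>x. x \<noteq> 0 \<Longrightarrow> 0 < inner (\<Gamma> x) x" and D: "1 \<le> D"
    and close: "onorm (\<lambda>u. (P \<circ> A \<circ> P) u - gamma_D b D \<Gamma> u) \<le> min_pos_eig (gamma_D b D \<Gamma>) / 2"
  shows "linear (pseudo_inv (P \<circ> A \<circ> P))"
    and "norm (pseudo_inv (P \<circ> A \<circ> P) x) \<le> (2 / min_pos_eig (gamma_D b D \<Gamma>)) * norm x"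
proof -
  obtain B where B: "finite B" "independent B" "card B = D" and PB: "is_orth_proj P (span B)"
    using P by (rule orth_proj_dimE)
  define t where "t = min_pos_eig (gamma_D b D \<Gamma>)"
  have t: "0 < t / 2" unfolding t_def using gamma_D_min_pos_eig(1)[OF \<Gamma> pos D] by simp
  interpret A: bounded_linear A using A by (simp add: selfadjoint_def)
  interpret P: bounded_linear P by (rule is_orth_proj_bounded_linear[OF PB])
  have T: "bounded_linear (P \<circ> A \<circ> P)"
    unfolding comp_def
    by (rule bounded_linear_compose[OF P.bounded_linear_axioms
          bounded_linear_compose[OF A.bounded_linear_axioms P.bounded_linear_axioms]])
  have coercive: "t / 2 * (norm v)\<^sup>2 \<le> inner ((P \<circ> A \<circ> P) v) v" if "v \<in> span B" for v
    using compression_coercive_on_range[OF PB B(1) _ independent_basis_prefix _ A.linear t _ that]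
      perturbed_gamma_D_coercive[OF \<Gamma> pos D T close] B(3)
    unfolding t_def by (simp add: card_basis_prefix)
  have "inj_on (P \<circ> A \<circ> P) (span B)"
    by (rule coercive_imp_inj_on[OF bounded_linear.linear[OF T] subspace_span t coercive])
  then have "(P \<circ> A \<circ> P) ` span B = span B"
    using B is_orth_proj_in[OF PB]
    by (intro linear_inj_on_span_eq_card[OF bounded_linear.linear[OF T]]) auto
  moreover have "(P \<circ> A \<circ> P) y \<in> span B" for y by (simp add: is_orth_proj_in[OF PB])
  ultimately have "linear (pseudo_inv (P \<circ> A \<circ> P))" "norm (pseudo_inv (P \<circ> A \<circ> P) x) \<le> norm x / (t / 2)"
    using pseudo_inv_coercive[OF PB bounded_linear.linear[OF T] _ _ t coercive] by blast+
  then show "linear (pseudo_inv (P \<circ> A \<circ> P))"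
    and "norm (pseudo_inv (P \<circ> A \<circ> P) x) \<le> (2 / min_pos_eig (gamma_D b D \<Gamma>)) * norm x"
    by (simp_all add: t_def mult.commute)
qed

end

section \<open>Effect of the truncation\<close>

lemma (in orthonormal_seq) hs_norm_cov_combination_le:
  assumes "\<bar>\<alpha>\<bar> \<le> 1" "\<bar>\<beta>\<bar> \<le> 1"
  shows "hs_norm b (\<lambda>u. \<alpha> *\<^sub>R R u - \<beta> *\<^sub>R tens r r u) \<le> hs_norm b R + ennreal ((norm r)\<^sup>2)"
proof -
  have "hs_norm b (\<lambda>u. \<alpha> *\<^sub>R R u - \<beta> *\<^sub>R tens r r u) \<le> hs_norm b R + hs_norm b (tens r r)"
  proof (rule hs_norm_le_pointwise_add)
    fix k
    have "norm (\<alpha> *\<^sub>R R (b k) - \<beta> *\<^sub>R tens r r (b k))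
        \<le> \<bar>\<alpha>\<bar> * norm (R (b k)) + \<bar>\<beta>\<bar> * norm (tens r r (b k))"
      using norm_triangle_ineq4[of "\<alpha> *\<^sub>R R (b k)" "\<beta> *\<^sub>R tens r r (b k)"] by simp
    also have "\<dots> \<le> norm (R (b k)) + norm (tens r r (b k))"
      using assms by (intro add_mono mult_left_le_one_le) auto
    finally show "norm (\<alpha> *\<^sub>R R (b k) - \<beta> *\<^sub>R tens r r (b k)) \<le> norm (R (b k)) + norm (tens r r (b k))" .
  qed
  also have "\<dots> \<le> hs_norm b R + ennreal ((norm r)\<^sup>2)"
    by (intro add_left_mono hs_norm_tens_le)
  finally show ?thesis .
qed

context orthonormal_basis
begin

text \<open>Since F Q F - G Q G = (F - G) Q F + G Q (F - G), each term is an operator of norm at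
  most K \<tau> composed with a Hilbert--Schmidt operator of norm at most K.\<close>
lemma hs_norm_sandwich_diff_le:
  assumes F: "bounded_linear F" and G: "bounded_linear G"
    and Q: "linear Q" "\<And>x. norm (Q x) \<le> \<tau> * norm x" "0 \<le> \<tau>" and "0 \<le> K"
    and hs: "hs_norm b F \<le> ennreal K" "hs_norm b G \<le> ennreal K" "hs_norm b (\<lambda>u. F u - G u) \<le> ennreal K"
  shows "hs_norm b (\<lambda>u. F (Q (F u)) - G (Q (G u))) \<le> ennreal (2 * \<tau> * K\<^sup>2)"
proof -
  interpret G: bounded_linear G by (rule G)
  interpret Q: linear Q by (rule Q(1))
  have op_G: "norm (G x) \<le> K * norm x" for x
    by (rule norm_le_hs_norm[OF G hs(2) \<open>0 \<le> K\<close>])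
  have op_FG: "norm (F x - G x) \<le> K * norm x" for x
    by (rule norm_le_hs_norm[OF bounded_linear_sub[OF F G] hs(3) \<open>0 \<le> K\<close>])
  have "hs_norm b (\<lambda>u. F (Q (F u)) - G (Q (F u))) \<le> ennreal (K * \<tau>) * hs_norm b F"
  proof (rule hs_norm_le_pointwise_scale)
    fix k
    show "norm (F (Q (F (b k))) - G (Q (F (b k)))) \<le> K * \<tau> * norm (F (b k))"
      using order_trans[OF op_FG mult_left_mono[OF Q(2) \<open>0 \<le> K\<close>]] by (simp add: mult.assoc)
  qed (use \<open>0 \<le> K\<close> Q(3) in simp)
  also have "\<dots> \<le> ennreal (K * \<tau>) * ennreal K" by (intro mult_left_mono hs(1)) simp
  finally have first: "hs_norm b (\<lambda>u. F (Q (F u)) - G (Q (F u))) \<le> ennreal (\<tau> * K\<^sup>2)"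
    using \<open>0 \<le> K\<close> Q(3) by (simp add: ennreal_mult'[symmetric] power2_eq_square mult_ac)
  have "hs_norm b (\<lambda>u. G (Q (F u - G u))) \<le> ennreal (K * \<tau>) * hs_norm b (\<lambda>u. F u - G u)"
  proof (rule hs_norm_le_pointwise_scale)
    fix k
    show "norm (G (Q (F (b k) - G (b k)))) \<le> K * \<tau> * norm (F (b k) - G (b k))"
      using order_trans[OF op_G mult_left_mono[OF Q(2) \<open>0 \<le> K\<close>]] by (simp add: mult.assoc)
  qed (use \<open>0 \<le> K\<close> Q(3) in simp)
  also have "\<dots> \<le> ennreal (K * \<tau>) * ennreal K" by (intro mult_left_mono hs(3)) simp
  finally have second: "hs_norm b (\<lambda>u. G (Q (F u - G u))) \<le> ennreal (\<tau> * K\<^sup>2)"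
    using \<open>0 \<le> K\<close> Q(3) by (simp add: ennreal_mult'[symmetric] power2_eq_square mult_ac)
  have "(\<lambda>u. F (Q (F u)) - G (Q (G u))) = (\<lambda>u. (F (Q (F u)) - G (Q (F u))) + G (Q (F u - G u)))"
    by (simp add: fun_eq_iff Q.diff G.diff)
  then have "hs_norm b (\<lambda>u. F (Q (F u)) - G (Q (G u)))
      \<le> hs_norm b (\<lambda>u. F (Q (F u)) - G (Q (F u))) + hs_norm b (\<lambda>u. G (Q (F u - G u)))"
    using hs_norm_add by metis
  also have "\<dots> \<le> ennreal (\<tau> * K\<^sup>2) + ennreal (\<tau> * K\<^sup>2)" by (rule add_mono[OF first second])
  also have "\<dots> = ennreal (2 * \<tau> * K\<^sup>2)"
    using \<open>0 \<le> K\<close> Q(3) by (simp flip: ennreal_plus)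
  finally show ?thesis .
qed

lemma hs_norm_cond_cov_sandwich_diff_le:
  assumes R: "bounded_linear (R y)" and Q: "linear Q" "\<And>x. norm (Q x) \<le> \<tau> * norm x" "0 < \<tau>"
    and f: "0 \<le> f y" and e: "0 < e"
  shows "hs_norm b (\<lambda>u. cond_cov R r y (Q (cond_cov R r y u))
            - cond_cov_trunc f e R r y (Q (cond_cov_trunc f e R r y u)))
       \<le> ennreal (2 * \<tau>) * ((hs_norm b (R y) + ennreal ((norm (r y))\<^sup>2))\<^sup>2 * indicator {y. f y < e} y)"
proof (cases "f y < e")
  case False
  then have "cond_cov_trunc f e R r y = cond_cov R r y"
    using e by (simp add: cond_cov_trunc_def cond_cov_def R_trunc_def r_trunc_def fun_eq_iff)
  then show ?thesis by (simp add: hs_norm_zero)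
next
  case True
  define \<theta> where "\<theta> = f y / e"
  have \<theta>: "0 \<le> \<theta>" "\<theta> \<le> 1" using True f e by (auto simp: \<theta>_def)
  have C: "cond_cov R r y = (\<lambda>u. 1 *\<^sub>R R y u - 1 *\<^sub>R tens (r y) (r y) u)"
    by (simp add: cond_cov_def fun_eq_iff)
  have Ce: "cond_cov_trunc f e R r y = (\<lambda>u. \<theta> *\<^sub>R R y u - (\<theta> * \<theta>) *\<^sub>R tens (r y) (r y) u)"
    using True by (simp add: cond_cov_trunc_def cond_cov_def R_trunc_def r_trunc_def tens_def \<theta>_def fun_eq_iff)
  have diff: "(\<lambda>u. cond_cov R r y u - cond_cov_trunc f e R r y u)
      = (\<lambda>u. (1 - \<theta>) *\<^sub>R R y u - (1 - \<theta> * \<theta>) *\<^sub>R tens (r y) (r y) u)"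
    unfolding C Ce by (simp add: fun_eq_iff algebra_simps)
  show ?thesis
  proof (cases "hs_norm b (R y)")
    case (real h)
    define K where "K = h + (norm (r y))\<^sup>2"
    have K: "0 \<le> K" "hs_norm b (R y) + ennreal ((norm (r y))\<^sup>2) = ennreal K"
      using real by (simp_all add: K_def)
    have bl: "bounded_linear (\<lambda>u. c *\<^sub>R R y u - d *\<^sub>R tens (r y) (r y) u)" for c d
      unfolding tens_def using R by (intro bounded_linear_intros) auto
    have hs: "hs_norm b (\<lambda>u. c *\<^sub>R R y u - d *\<^sub>R tens (r y) (r y) u) \<le> ennreal K"
      if "\<bar>c\<bar> \<le> 1" "\<bar>d\<bar> \<le> 1" for c d
      using hs_norm_cov_combination_le[OF that, of "R y" "r y"] K(2) by simp
    have "\<theta> * \<theta> \<le> 1" using \<theta> by (simp add: mult_le_one)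
    then have "hs_norm b (\<lambda>u. cond_cov R r y (Q (cond_cov R r y u))
            - cond_cov_trunc f e R r y (Q (cond_cov_trunc f e R r y u))) \<le> ennreal (2 * \<tau> * K\<^sup>2)"
    proof (intro hs_norm_sandwich_diff_le[OF _ _ Q(1,2) _ K(1)])
      show "bounded_linear (cond_cov R r y)" "bounded_linear (cond_cov_trunc f e R r y)"
        unfolding C Ce by (rule bl)+
      show "hs_norm b (cond_cov R r y) \<le> ennreal K" unfolding C by (rule hs) simp_all
      show "hs_norm b (cond_cov_trunc f e R r y) \<le> ennreal K"
        unfolding Ce using \<theta> \<open>\<theta> * \<theta> \<le> 1\<close> by (intro hs) simp_all
      show "hs_norm b (\<lambda>u. cond_cov R r y u - cond_cov_trunc f e R r y u) \<le> ennreal K"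
        unfolding diff using \<theta> \<open>\<theta> * \<theta> \<le> 1\<close> by (intro hs) simp_all
    qed (use Q(3) in simp)
    also have "\<dots> = ennreal (2 * \<tau>) * (ennreal K)\<^sup>2"
      using Q(3) K(1) by (simp add: ennreal_mult' ennreal_power)
    finally show ?thesis using True by (simp add: K(2))
  qed (use True Q(3) in \<open>simp add: ennreal_mult_top\<close>)
qed

lemma hs_norm_avg_sandwich_diff_le:
  assumes "\<And>y. bounded_linear (R y)" "linear Q" "\<And>x. norm (Q x) \<le> \<tau> * norm x" "0 < \<tau>"
    and "\<And>y. 0 \<le> f y" "0 < e"
  shows "hs_norm b (\<lambda>u. avg_sandwich n (cond_cov R r) Q ys u - avg_sandwich n (cond_cov_trunc f e R r) Q ys u)
    \<le> ennreal (2 * \<tau>) * (ennreal (1 / real n) * (\<Sum>j<n. (hs_norm b (R (ys j))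
          + ennreal ((norm (r (ys j)))\<^sup>2))\<^sup>2 * indicator {y. f y < e} (ys j)))"
proof -
  define S where "S j u = cond_cov R r (ys j) (Q (cond_cov R r (ys j) u))
    - cond_cov_trunc f e R r (ys j) (Q (cond_cov_trunc f e R r (ys j) u))" for j u
  have "hs_norm b (\<lambda>u. avg_sandwich n (cond_cov R r) Q ys u - avg_sandwich n (cond_cov_trunc f e R r) Q ys u)
      = hs_norm b (\<lambda>u. (1 / real n) *\<^sub>R (\<Sum>j<n. S j u))"
    by (simp add: S_def avg_sandwich_def scaleR_diff_right sum_subtractf)
  also have "\<dots> \<le> ennreal (1 / real n) * hs_norm b (\<lambda>u. \<Sum>j<n. S j u)"
    using hs_norm_scaleR[of b "1 / real n"] by simp
  also have "\<dots> \<le> ennreal (1 / real n) * (\<Sum>j<n. hs_norm b (S j))"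
    by (intro mult_left_mono hs_norm_sum) auto
  also have "\<dots> \<le> ennreal (1 / real n) * (\<Sum>j<n. ennreal (2 * \<tau>) * ((hs_norm b (R (ys j))
          + ennreal ((norm (r (ys j)))\<^sup>2))\<^sup>2 * indicator {y. f y < e} (ys j)))"
    unfolding S_def using assms by (intro mult_left_mono sum_mono hs_norm_cond_cov_sandwich_diff_le) auto
  finally show ?thesis by (simp only: sum_distrib_left[symmetric] mult.left_commute)
qed

lemma hs_norm_avg_sandwich_diff_pseudo_inv_le:
  assumes P: "orth_proj_dim P D" and \<Gamma>: "selfadjoint \<Gamma>"
    and pos: "\<And>x. x \<noteq> 0 \<Longrightarrow> 0 < inner (\<Gamma> x) x" and D: "1 \<le> D"
    and close: "onorm (\<lambda>u. (P \<circ> gamma_hat n xs \<circ> P) u - gamma_D b D \<Gamma> u)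
      \<le> min_pos_eig (gamma_D b D \<Gamma>) / 2"
    and R: "\<And>y. bounded_linear (R y)" and f: "\<And>y. 0 \<le> f y" and e: "0 < e"
  shows "hs_norm b (\<lambda>u. avg_sandwich n (cond_cov R r) (pseudo_inv (P \<circ> gamma_hat n xs \<circ> P)) ys u
            - avg_sandwich n (cond_cov_trunc f e R r) (pseudo_inv (P \<circ> gamma_hat n xs \<circ> P)) ys u)
    \<le> ennreal (4 / min_pos_eig (gamma_D b D \<Gamma>)) * (ennreal (1 / real n) * (\<Sum>j<n. (hs_norm b (R (ys j))
          + ennreal ((norm (r (ys j)))\<^sup>2))\<^sup>2 * indicator {y. f y < e} (ys j)))"
proof -
  note Q = pseudo_inv_sandwich_bound[OF P selfadjoint_gamma_hat \<Gamma> pos D close]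
  have "0 < min_pos_eig (gamma_D b D \<Gamma>)" by (rule gamma_D_min_pos_eig(1)[OF \<Gamma> pos D])
  then show ?thesis
    using hs_norm_avg_sandwich_diff_le[OF R Q(1) Q(2) _ f e] by simp
qed

end

section \<open>Stochastic order bounds\<close>

lemma outer_prob_le_mono:
  assumes "outer_prob_le M B \<delta>" "A \<inter> space M \<subseteq> B"
  shows "outer_prob_le M A \<delta>"
  using assms unfolding outer_prob_le_def by blast

lemma (in prob_space) outer_prob_le_Un:
  assumes "outer_prob_le M A \<delta>" "outer_prob_le M B \<epsilon>"
  shows "outer_prob_le M (A \<union> B) (\<delta> + \<epsilon>)"
proof -
  obtain A' B' where "A' \<in> events" "A \<inter> space M \<subseteq> A'" "prob A' \<le> \<delta>"
    and "B' \<in> events" "B \<inter> space M \<subseteq> B'" "prob B' \<le> \<epsilon>"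
    using assms unfolding outer_prob_le_def by blast
  then show ?thesis
    unfolding outer_prob_le_def
    by (intro bexI[of _ "A' \<union> B'"]) (auto intro: order_trans[OF measure_Un_le])
qed

lemma (in prob_space) outer_prob_le_Markov:
  assumes "S \<in> borel_measurable M" "ennreal c * (\<integral>\<^sup>+\<omega>. S \<omega> \<partial>M) \<le> ennreal \<delta>" "0 \<le> \<delta>"
  shows "outer_prob_le M {\<omega>. 1 \<le> ennreal c * S \<omega>} \<delta>"
  unfolding outer_prob_le_def
proof (intro bexI conjI)
  let ?B = "{\<omega> \<in> space M. 1 \<le> ennreal c * S \<omega>}"
  show "?B \<in> events" using assms(1) by measurable
  have "emeasure M ?B \<le> ennreal c * (\<integral>\<^sup>+\<omega>. S \<omega> * indicator (space M) \<omega> \<partial>M)"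
    using assms(1) by (intro nn_integral_Markov_inequality) auto
  also have "(\<integral>\<^sup>+\<omega>. S \<omega> * indicator (space M) \<omega> \<partial>M) = (\<integral>\<^sup>+\<omega>. S \<omega> \<partial>M)"
    by (intro nn_integral_cong) simp
  finally have "emeasure M ?B \<le> ennreal \<delta>" using assms(2) by (rule order_trans)
  then show "prob ?B \<le> \<delta>" using assms(3) by (simp add: emeasure_eq_measure)
qed auto

lemma ennreal_one_le_of_less_scaled:
  assumes "ennreal (1 / (t * s)) < ennreal (C / t) * x" "0 < t" "0 < s"
  shows "1 \<le> ennreal (C * s) * x"
proof -
  have "1 = ennreal (t * s) * ennreal (1 / (t * s))"
    using assms(2,3) by (simp flip: ennreal_mult')
  also have "\<dots> \<le> ennreal (t * s) * (ennreal (C / t) * x)"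
    using assms(1) by (intro mult_left_mono) simp_all
  also have "\<dots> = ennreal (C * s) * x"
    using assms(2,3) by (simp add: ennreal_mult'[symmetric] mult.assoc[symmetric] mult.commute[of s C])
  finally show ?thesis .
qed

lemma big_Op_of_dominated_on_good_event:
  assumes M: "prob_space M" and W: "small_op M W t" and t: "\<And>n. 0 < t n"
    and S: "\<And>n. S n \<in> borel_measurable M" and "0 \<le> C"
    and lim: "(\<lambda>n. ennreal (sqrt (real n)) * (\<integral>\<^sup>+\<omega>. S n \<omega> \<partial>M)) \<longlonglongrightarrow> 0"
    and bound: "\<And>n \<omega>. \<omega> \<in> space M \<Longrightarrow> \<bar>W n \<omega>\<bar> \<le> t n / 2 \<Longrightarrow> Z n \<omega> \<le> ennreal (C / t n) * S n \<omega>"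
  shows "big_Op M Z (\<lambda>n. 1 / (t n * sqrt (real n)))"
  unfolding big_Op_def
proof (intro allI impI exI[of _ 1])
  interpret prob_space M by (rule M)
  fix \<delta> :: real assume "0 < \<delta>"
  have "(\<lambda>n. ennreal C * (ennreal (sqrt (real n)) * (\<integral>\<^sup>+\<omega>. S n \<omega> \<partial>M))) \<longlonglongrightarrow> ennreal C * 0"
    using lim by (intro ennreal_tendsto_cmult) simp_all
  then have "eventually (\<lambda>n. ennreal (C * sqrt (real n)) * (\<integral>\<^sup>+\<omega>. S n \<omega> \<partial>M) < ennreal (\<delta> / 2))
      sequentially"
    using \<open>0 < \<delta>\<close> \<open>0 \<le> C\<close>
    by (auto dest!: order_tendstoD(2)[of _ 0 _ "ennreal (\<delta> / 2)"] simp: ennreal_mult' mult.assoc)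
  moreover have "eventually (\<lambda>n. outer_prob_le M {\<omega>. 1 / 2 * t n < \<bar>W n \<omega>\<bar>} (\<delta> / 2)) sequentially"
    using W[unfolded small_op_def, rule_format, of "1 / 2" "\<delta> / 2"] \<open>0 < \<delta>\<close> by simp
  moreover have "eventually (\<lambda>n. 1 \<le> n) sequentially" by (rule eventually_ge_at_top)
  ultimately show "eventually (\<lambda>n. outer_prob_le M
      {\<omega>. ennreal (1 * (1 / (t n * sqrt (real n)))) < Z n \<omega>} \<delta>) sequentially"
  proof eventually_elim
    case (elim n)
    have "outer_prob_le M {\<omega>. 1 \<le> ennreal (C * sqrt (real n)) * S n \<omega>} (\<delta> / 2)"
      using elim(1) \<open>0 < \<delta>\<close> by (intro outer_prob_le_Markov S less_imp_le) simp_all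
    then have union: "outer_prob_le M
        ({\<omega>. 1 / 2 * t n < \<bar>W n \<omega>\<bar>} \<union> {\<omega>. 1 \<le> ennreal (C * sqrt (real n)) * S n \<omega>}) \<delta>"
      using outer_prob_le_Un[OF elim(2)] by fastforce
    have big: "1 \<le> ennreal (C * sqrt (real n)) * S n \<omega>"
      if "\<omega> \<in> space M" "\<bar>W n \<omega>\<bar> \<le> t n / 2" "ennreal (1 / (t n * sqrt (real n))) < Z n \<omega>" for \<omega>
      using less_le_trans[OF that(3) bound[OF that(1,2)]] t[of n] elim(3)
      by (intro ennreal_one_le_of_less_scaled) simp_all
    show ?case
      by (rule outer_prob_le_mono[OF union]) (use big in \<open>force simp: not_less\<close>)
  qed
qed

lemma borel_measurable_density:
  assumes "distributed M lborel Y (\<lambda>y. ennreal (f y))" "\<And>y. 0 \<le> f y"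
  shows "f \<in> borel_measurable borel"
proof -
  have "(\<lambda>y. enn2real (ennreal (f y))) \<in> borel_measurable borel"
    using distributed_borel_measurable[OF assms(1)] by simp
  then show ?thesis using assms(2) by simp
qed

lemma borel_measurable_snd_borel:
  "snd \<in> borel_measurable (borel :: ('a::topological_space \<times> 'b::topological_space) measure)"
  using borel_measurable_continuous_onI[OF continuous_on_snd[OF continuous_on_id]] by simp

lemma nn_integral_snd_eq_of_distr_eq:
  fixes X X' :: "'w \<Rightarrow> 'a::topological_space" and Y Y' :: "'w \<Rightarrow> 'b::topological_space"
  assumes XY': "(\<lambda>\<omega>. (X' \<omega>, Y' \<omega>)) \<in> borel_measurable M" and XY: "(\<lambda>\<omega>. (X \<omega>, Y \<omega>)) \<in> borel_measurable M"
    and distr: "distr M borel (\<lambda>\<omega>. (X' \<omega>, Y' \<omega>)) = distr M borel (\<lambda>\<omega>. (X \<omega>, Y \<omega>))"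
    and g: "g \<in> borel_measurable borel"
  shows "(\<integral>\<^sup>+\<omega>. g (Y' \<omega>) \<partial>M) = (\<integral>\<^sup>+\<omega>. g (Y \<omega>) \<partial>M)"
proof -
  have "(\<lambda>p. g (snd p)) \<in> borel_measurable (borel :: ('a \<times> 'b) measure)"
    by (rule measurable_compose[OF borel_measurable_snd_borel g])
  then show ?thesis
    using nn_integral_distr[OF XY', of "\<lambda>p. g (snd p)"] nn_integral_distr[OF XY, of "\<lambda>p. g (snd p)"]
    unfolding distr by simp
qed

lemma nn_integral_sample_mean_le:
  assumes "\<And>j. (\<lambda>\<omega>. g (Ys j \<omega>)) \<in> borel_measurable M" "\<And>j. (\<integral>\<^sup>+\<omega>. g (Ys j \<omega>) \<partial>M) = I"
  shows "(\<integral>\<^sup>+\<omega>. ennreal (1 / real n) * (\<Sum>j<n. g (Ys j \<omega>)) \<partial>M) \<le> I"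
proof (cases "n = 0")
  case False
  have "(\<integral>\<^sup>+\<omega>. ennreal (1 / real n) * (\<Sum>j<n. g (Ys j \<omega>)) \<partial>M) = ennreal (1 / real n) * (of_nat n * I)"
    using assms by (simp add: nn_integral_cmult nn_integral_sum)
  also have "\<dots> = I"
    using False by (simp add: ennreal_of_nat_eq_real_of_nat mult.assoc[symmetric] flip: ennreal_mult')
  finally show ?thesis by simp
qed simp

lemma tendsto_sqrt_nn_integral_sample_mean:
  assumes XYs: "\<And>j. (\<lambda>\<omega>. (Xs j \<omega>, Ys j \<omega>)) \<in> borel_measurable M"
    and XY: "(\<lambda>\<omega>. (X \<omega>, Y \<omega>)) \<in> borel_measurable M"
    and distr: "\<And>j. distr M borel (\<lambda>\<omega>. (Xs j \<omega>, Ys j \<omega>)) = distr M borel (\<lambda>\<omega>. (X \<omega>, Y \<omega>))"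
    and g: "\<And>n. g n \<in> borel_measurable borel"
    and lim: "(\<lambda>n. ennreal (sqrt (real n)) * (\<integral>\<^sup>+\<omega>. g n (Y \<omega>) \<partial>M)) \<longlonglongrightarrow> 0"
  shows "(\<lambda>n. ennreal (sqrt (real n)) * (\<integral>\<^sup>+\<omega>. ennreal (1 / real n) * (\<Sum>j<n. g n (Ys j \<omega>)) \<partial>M))
    \<longlonglongrightarrow> 0"
proof (rule tendsto_sandwich[OF eventuallyI eventuallyI tendsto_const lim])
  fix n
  have "(\<lambda>\<omega>. g n (Ys j \<omega>)) \<in> borel_measurable M" for j
    using measurable_compose[OF measurable_compose[OF XYs borel_measurable_snd_borel] g] by simp
  then show "ennreal (sqrt (real n)) * (\<integral>\<^sup>+\<omega>. ennreal (1 / real n) * (\<Sum>j<n. g n (Ys j \<omega>)) \<partial>M)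
      \<le> ennreal (sqrt (real n)) * (\<integral>\<^sup>+\<omega>. g n (Y \<omega>) \<partial>M)"
    using nn_integral_snd_eq_of_distr_eq[OF XYs XY distr g]
    by (intro mult_left_mono nn_integral_sample_mean_le) simp_all
qed simp

lemma tendsto_nn_integral_square_sum:
  fixes a c :: "'w \<Rightarrow> ennreal" and I :: "nat \<Rightarrow> 'w \<Rightarrow> ennreal"
  assumes [measurable]: "a \<in> borel_measurable M" "c \<in> borel_measurable M" "\<And>n. I n \<in> borel_measurable M"
    and "(\<lambda>n. s n * (\<integral>\<^sup>+\<omega>. a \<omega> ^ 2 * I n \<omega> \<partial>M)) \<longlonglongrightarrow> 0"
    and "(\<lambda>n. s n * (\<integral>\<^sup>+\<omega>. a \<omega> * c \<omega> * I n \<omega> \<partial>M)) \<longlonglongrightarrow> 0"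
    and "(\<lambda>n. s n * (\<integral>\<^sup>+\<omega>. c \<omega> ^ 2 * I n \<omega> \<partial>M)) \<longlonglongrightarrow> 0"
  shows "(\<lambda>n. s n * (\<integral>\<^sup>+\<omega>. (a \<omega> + c \<omega>)\<^sup>2 * I n \<omega> \<partial>M)) \<longlonglongrightarrow> 0"
proof -
  have "s n * (\<integral>\<^sup>+\<omega>. (a \<omega> + c \<omega>)\<^sup>2 * I n \<omega> \<partial>M)
      = s n * (\<integral>\<^sup>+\<omega>. a \<omega> ^ 2 * I n \<omega> \<partial>M) + 2 * (s n * (\<integral>\<^sup>+\<omega>. a \<omega> * c \<omega> * I n \<omega> \<partial>M))
        + s n * (\<integral>\<^sup>+\<omega>. c \<omega> ^ 2 * I n \<omega> \<partial>M)" for n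
  proof -
    have "(\<integral>\<^sup>+\<omega>. (a \<omega> + c \<omega>)\<^sup>2 * I n \<omega> \<partial>M)
        = (\<integral>\<^sup>+\<omega>. a \<omega> ^ 2 * I n \<omega> + 2 * (a \<omega> * c \<omega> * I n \<omega>) + c \<omega> ^ 2 * I n \<omega> \<partial>M)"
      by (intro nn_integral_cong) (simp add: power2_sum algebra_simps)
    also have "\<dots> = (\<integral>\<^sup>+\<omega>. a \<omega> ^ 2 * I n \<omega> \<partial>M) + 2 * (\<integral>\<^sup>+\<omega>. a \<omega> * c \<omega> * I n \<omega> \<partial>M)
        + (\<integral>\<^sup>+\<omega>. c \<omega> ^ 2 * I n \<omega> \<partial>M)"
      by (simp add: nn_integral_add nn_integral_cmult)
    finally show ?thesis by (simp add: algebra_simps)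
  qed
  moreover have "(\<lambda>n. s n * (\<integral>\<^sup>+\<omega>. a \<omega> ^ 2 * I n \<omega> \<partial>M) + 2 * (s n * (\<integral>\<^sup>+\<omega>. a \<omega> * c \<omega> * I n \<omega> \<partial>M))
        + s n * (\<integral>\<^sup>+\<omega>. c \<omega> ^ 2 * I n \<omega> \<partial>M)) \<longlonglongrightarrow> 0 + 2 * 0 + 0"
    using assms(4-6) by (intro tendsto_add ennreal_tendsto_cmult) simp_all
  ultimately show ?thesis by simp
qed

theorem lemma4:
  fixes M :: "'w measure"
    and X :: "'w \<Rightarrow> 'h::{real_inner,complete_space,second_countable_topology}"
    and Y :: "'w \<Rightarrow> real"
    and f :: "real \<Rightarrow> real" and r :: "real \<Rightarrow> 'h" and R :: "real \<Rightarrow> 'h \<Rightarrow> 'h"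
    and \<Gamma> :: "'h \<Rightarrow> 'h" and e :: "nat \<Rightarrow> real" and b :: "nat \<Rightarrow> 'h" and D :: "nat \<Rightarrow> nat"
    and Xs :: "nat \<Rightarrow> 'w \<Rightarrow> 'h" and Ys :: "nat \<Rightarrow> 'w \<Rightarrow> real"
    and PiHat :: "nat \<Rightarrow> 'w \<Rightarrow> 'h \<Rightarrow> 'h"
  assumes P: "prob_space M"
    and X_meas: "X \<in> borel_measurable M" and Y_meas: "Y \<in> borel_measurable M"
    and X_mean: "integrable M X" "integral\<^sup>L M X = 0"
    and f_nonneg: "\<forall>y. 0 \<le> f y"
    and f_density: "distributed M lborel Y (\<lambda>y. ennreal (f y))"
    and b_orthonormal: "\<forall>i j. inner (b i) (b j) = (if i = j then 1 else 0)"
    and b_complete: "closure (span (range b)) = UNIV"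
    and Gamma_lin: "bounded_linear \<Gamma>"
    and Gamma_def: "\<forall>u v. integral\<^sup>L M (\<lambda>\<omega>. inner (X \<omega>) u * inner (X \<omega>) v) = inner (\<Gamma> u) v"
    and Gamma_nonsing: "inj \<Gamma>"
    and Gamma_posdef: "\<forall>x. x \<noteq> 0 \<longrightarrow> 0 < inner (\<Gamma> x) x"
    and r_meas: "r \<in> borel_measurable borel"
    and r_condexp: "\<forall>u. \<forall>B\<in>sets borel.
          set_integrable lborel B (\<lambda>y. f y * inner (r y) u) \<and>
          integral\<^sup>L M (\<lambda>\<omega>. indicator B (Y \<omega>) * inner (X \<omega>) u)
            = (LINT y:B|lborel. f y * inner (r y) u)"
    and R_lin: "\<forall>y. bounded_linear (R y)"
    and R_meas: "\<forall>u v. (\<lambda>y. inner (R y u) v) \<in> borel_measurable borel"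
    and R_condexp: "\<forall>u v. \<forall>B\<in>sets borel.
          set_integrable lborel B (\<lambda>y. f y * inner (R y u) v) \<and>
          integral\<^sup>L M (\<lambda>\<omega>. indicator B (Y \<omega>) * (inner (X \<omega>) u * inner (X \<omega>) v))
            = (LINT y:B|lborel. f y * inner (R y u) v)"
    and e_pos: "\<forall>n. 0 < e n" and e_lim: "e \<longlonglongrightarrow> 0"
    and D_pos: "\<forall>n. 1 \<le> D n" and D_lim: "filterlim D at_top sequentially"
    and sample_indep: "prob_space.indep_vars M (\<lambda>_. borel) (\<lambda>i \<omega>. (Xs i \<omega>, Ys i \<omega>)) UNIV"
    and sample_distr: "\<forall>i. distr M borel (\<lambda>\<omega>. (Xs i \<omega>, Ys i \<omega>)) = distr M borel (\<lambda>\<omega>. (X \<omega>, Y \<omega>))"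
    and PiHat_proj: "\<forall>n \<omega>. orth_proj_dim (PiHat n \<omega>) (D n)"
    and A3_moment: "(\<integral>\<^sup>+\<omega>. ennreal (norm (X \<omega>) ^ 4) \<partial>M) < \<infinity>"
    and A10_1: "(\<lambda>n. ennreal (sqrt (real n)) *
          (\<integral>\<^sup>+\<omega>. hs_norm b (R (Y \<omega>)) ^ 2 * indicator {y. f y < e n} (Y \<omega>) \<partial>M)) \<longlonglongrightarrow> 0"
    and A10_2: "(\<lambda>n. ennreal (sqrt (real n)) *
          (\<integral>\<^sup>+\<omega>. hs_norm b (R (Y \<omega>)) * ennreal ((norm (r (Y \<omega>)))\<^sup>2)
                   * indicator {y. f y < e n} (Y \<omega>) \<partial>M)) \<longlonglongrightarrow> 0"
    and A10_3: "(\<lambda>n. ennreal (sqrt (real n)) *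
          (\<integral>\<^sup>+\<omega>. ennreal ((norm (r (Y \<omega>))) ^ 4) * indicator {y. f y < e n} (Y \<omega>) \<partial>M)) \<longlonglongrightarrow> 0"
    and hyp: "small_op M
          (\<lambda>n \<omega>. onorm (\<lambda>u. (PiHat n \<omega> \<circ> gamma_hat n (\<lambda>i. Xs i \<omega>) \<circ> PiHat n \<omega>) u
                            - gamma_D b (D n) \<Gamma> u))
          (\<lambda>n. min_pos_eig (gamma_D b (D n) \<Gamma>))"
  shows "big_Op M
          (\<lambda>n \<omega>. hs_norm b (\<lambda>u.
              avg_sandwich n (cond_cov R r)
                 (pseudo_inv (PiHat n \<omega> \<circ> gamma_hat n (\<lambda>i. Xs i \<omega>) \<circ> PiHat n \<omega>)) (\<lambda>j. Ys j \<omega>) u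
            - avg_sandwich n (cond_cov_trunc f (e n) R r)
                 (pseudo_inv (PiHat n \<omega> \<circ> gamma_hat n (\<lambda>i. Xs i \<omega>) \<circ> PiHat n \<omega>)) (\<lambda>j. Ys j \<omega>) u))
          (\<lambda>n. 1 / (min_pos_eig (gamma_D b (D n) \<Gamma>) * sqrt (real n)))"
proof -
  interpret prob_space M by (rule P)
  interpret orthonormal_basis b using b_orthonormal b_complete by unfold_locales auto
  have \<Gamma>: "selfadjoint \<Gamma>"
    using selfadjoint_second_moment Gamma_lin Gamma_def by blast
  have t: "0 < min_pos_eig (gamma_D b (D n) \<Gamma>)" for n
    using gamma_D_min_pos_eig(1)[OF \<Gamma>] Gamma_posdef D_pos by blast
  define g where "g n y = (hs_norm b (R y) + ennreal ((norm (r y))\<^sup>2))\<^sup>2 * indicator {y. f y < e n} y"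
    for n y
  define S where "S n \<omega> = ennreal (1 / real n) * (\<Sum>j<n. g n (Ys j \<omega>))" for n \<omega>
  have [measurable]: "f \<in> borel_measurable borel" "(\<lambda>y. hs_norm b (R y)) \<in> borel_measurable borel"
    using borel_measurable_density[OF f_density] f_nonneg borel_measurable_hs_norm R_meas by auto
  note [measurable] = r_meas Y_meas
  have g[measurable]: "g n \<in> borel_measurable borel" for n unfolding g_def by measurable
  have XY: "(\<lambda>\<omega>. (X \<omega>, Y \<omega>)) \<in> borel_measurable M" using X_meas Y_meas by measurable
  have XYs: "(\<lambda>\<omega>. (Xs j \<omega>, Ys j \<omega>)) \<in> borel_measurable M" for j
    using sample_indep unfolding indep_vars_def by auto
  then have [measurable]: "Ys j \<in> borel_measurable M" for j
    using measurable_compose[OF XYs borel_measurable_snd_borel] by simp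
  have "(\<lambda>n. ennreal (sqrt (real n)) * (\<integral>\<^sup>+\<omega>. g n (Y \<omega>) \<partial>M)) \<longlonglongrightarrow> 0"
    unfolding g_def using A10_1 A10_2 A10_3
    by (intro tendsto_nn_integral_square_sum) (simp_all add: ennreal_power power_mult[symmetric])
  then have "(\<lambda>n. ennreal (sqrt (real n)) * (\<integral>\<^sup>+\<omega>. S n \<omega> \<partial>M)) \<longlonglongrightarrow> 0"
    unfolding S_def using XYs XY sample_distr g by (intro tendsto_sqrt_nn_integral_sample_mean) auto
  moreover have "S n \<in> borel_measurable M" for n unfolding S_def by measurable
  ultimately show ?thesis
  proof (intro big_Op_of_dominated_on_good_event[OF P hyp t, where C=4])
    fix n \<omega>
    assume "\<bar>onorm (\<lambda>u. (PiHat n \<omega> \<circ> gamma_hat n (\<lambda>i. Xs i \<omega>) \<circ> PiHat n \<omega>) u - gamma_D b (D n) \<Gamma> u)\<bar>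
      \<le> min_pos_eig (gamma_D b (D n) \<Gamma>) / 2"
    then show "hs_norm b (\<lambda>u. avg_sandwich n (cond_cov R r)
          (pseudo_inv (PiHat n \<omega> \<circ> gamma_hat n (\<lambda>i. Xs i \<omega>) \<circ> PiHat n \<omega>)) (\<lambda>j. Ys j \<omega>) u
        - avg_sandwich n (cond_cov_trunc f (e n) R r)
          (pseudo_inv (PiHat n \<omega> \<circ> gamma_hat n (\<lambda>i. Xs i \<omega>) \<circ> PiHat n \<omega>)) (\<lambda>j. Ys j \<omega>) u)
      \<le> ennreal (4 / min_pos_eig (gamma_D b (D n) \<Gamma>)) * S n \<omega>"
      unfolding S_def g_def
      using PiHat_proj \<Gamma> Gamma_posdef D_pos R_lin f_nonneg e_pos
      by (intro hs_norm_avg_sandwich_diff_pseudo_inv_le) auto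
  qed simp_all
qed

end
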